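(* Let $\mu,\varepsilon,\nu,\Omega,\omega$ be real or complex parameters with $\mu\neq 0$ and $\nu\notin\{0,-1,-2,\dots\}$, and consider the grand confluent hypergeometric (GCH) equation $$x\,y''(x)+\left(\mu x^2+\varepsilon x+\nu\right)y'(x)+\left(\Omega x+\varepsilon\omega\right)y(x)=0 .$$ Put $\gamma=\tfrac12(1+\nu)$, $a=\frac{\Omega}{2\mu}$, $\tilde\varepsilon=-\tfrac12\varepsilon x$ and $z=-\tfrac12\mu x^2$, and assume $\gamma-a$ is not a nonpositive integer. Then the function $$ \begin{aligned} y(x)=QW\Big(\omega,\gamma;\tilde\varepsilon;z\Big)=\frac{\Gamma(\gamma-a)}{\Gamma(\gamma)}\Bigg\{&\sum_{i_0=0}^{\infty}\frac{(a)_{i_0}}{(1)_{i_0}(\gamma)_{i_0}}z^{i_0}\\ &+\Bigg\{\sum_{i_0=0}^{\infty}\frac{(i_0+\frac{\omega}{2})}{(i_0+\frac12)(i_0-\frac12+\gamma)}\frac{(a)_{i_0}}{(1)_{i_0}(\gamma)_{i_0}}\sum_{i_1=i_0}^{\infty}\frac{(a+\frac12)_{i_1}(\frac32)_{i_0}(\gamma+\frac12)_{i_0}}{(a+\frac12)_{i_0}(\frac32)_{i_1}(\gamma+\frac12)_{i_1}}z^{i_1}\Bigg\}\tilde\varepsilon\\ &+\sum_{n=2}^{\infty}\Bigg\{\sum_{i_0=0}^{\infty}\frac{(i_0+\frac{\omega}{2})}{(i_0+\frac12)(i_0-\frac12+\gamma)}\frac{(a)_{i_0}}{(1)_{i_0}(\gamma)_{i_0}}\\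 &\quad\times\prod_{k=1}^{n-1}\Bigg\{\sum_{i_k=i_{k-1}}^{\infty}\frac{(i_k+\frac{\omega}{2}+\frac{k}{2})}{(i_k+\frac12+\frac k2)(i_k-\frac12+\gamma+\frac k2)}\frac{(a+\frac k2)_{i_k}(1+\frac k2)_{i_{k-1}}(\frac k2+\gamma)_{i_{k-1}}}{(a+\frac k2)_{i_{k-1}}(1+\frac k2)_{i_k}(\frac k2+\gamma)_{i_k}}\Bigg\}\\ &\quad\times\sum_{i_n=i_{n-1}}^{\infty}\frac{(a+\frac n2)_{i_n}(1+\frac n2)_{i_{n-1}}(\frac n2+\gamma)_{i_{n-1}}}{(a+\frac n2)_{i_{n-1}}(1+\frac n2)_{i_n}(\frac n2+\gamma)_{i_n}}z^{i_n}\Bigg\}\tilde\varepsilon^{\,n}\Bigg\} \end{aligned} $$ is the power series expansion about $x=0$ of a solution (the solution of the first kind, corresponding to the indicial root $\lambda=0$) of the GCH equation.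
   Context: $(x)_n=\Gamma(x+n)/\Gamma(x)$ denotes the Pochhammer symbol (rising factorial), and for integers $m\ge n\ge 0$ a quotient $(b)_m/(b)_n$ is understood as $\prod_{j=n}^{m-1}(b+j)$. In the term with index $n\ge 2$, the product over $k=1,\dots,n-1$ denotes nested summation: the sum over $i_k$ runs from $i_{k-1}$ to $\infty$, with $i_{k-1}$ the summation index of the previous level, and the innermost sum over $i_n$ runs from $i_{n-1}$ to $\infty$. *)

theory Defs
  imports "HOL-Analysis.Analysis"
begin

text \<open>Quotient of Pochhammer symbols
  (a+k/2)_j (1+k/2)_i (k/2+gam)_i / ((a+k/2)_i (1+k/2)_j (k/2+gam)_j)  for i <= j,
  understood as the product over t = i, ..., j-1.\<close>
definition qwR :: "complex \<Rightarrow> complex \<Rightarrow> nat \<Rightarrow> nat \<Rightarrow> nat \<Rightarrow> complex" where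
  "qwR a gam k i j = (\<Prod>t\<in>{i..<j}.
     (a + of_nat k / 2 + of_nat t) / ((1 + of_nat k / 2 + of_nat t) * (of_nat k / 2 + gam + of_nat t)))"

text \<open>Summand factor at level k (1 <= k <= n-1), indices i_{k-1} = i, i_k = j.\<close>
definition qwG :: "complex \<Rightarrow> complex \<Rightarrow> complex \<Rightarrow> nat \<Rightarrow> nat \<Rightarrow> nat \<Rightarrow> complex" where
  "qwG a gam om k i j =
     (of_nat j + om / 2 + of_nat k / 2) /
       ((of_nat j + 1/2 + of_nat k / 2) * (of_nat j - 1/2 + gam + of_nat k / 2)) * qwR a gam k i j"

definition qwF0 :: "complex \<Rightarrow> complex \<Rightarrow> complex \<Rightarrow> nat \<Rightarrow> complex" where
  "qwF0 a gam om i =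
     (of_nat i + om / 2) / ((of_nat i + 1/2) * (of_nat i - 1/2 + gam)) *
     (pochhammer a i / (pochhammer 1 i * pochhammer gam i))"

text \<open>Summand of the inner sum at level k = n - d, with previous index i, as function of m
  (current index i + m).  Level n (d = 0) is the innermost sum carrying z^{i_n}.\<close>
fun qwLev :: "complex \<Rightarrow> complex \<Rightarrow> complex \<Rightarrow> complex \<Rightarrow> nat \<Rightarrow> nat \<Rightarrow> nat \<Rightarrow> complex"
and qwLevTerm :: "complex \<Rightarrow> complex \<Rightarrow> complex \<Rightarrow> complex \<Rightarrow> nat \<Rightarrow> nat \<Rightarrow> nat \<Rightarrow> nat \<Rightarrow> complex" where
  "qwLevTerm a gam om z 0 n i m = qwR a gam n i (i + m) * z ^ (i + m)"
| "qwLevTerm a gam om z (Suc d) n i m = qwG a gam om (n - Suc d) i (i + m) * qwLev a gam om z d n (i + m)"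
| "qwLev a gam om z d n i = (\<Sum>m. qwLevTerm a gam om z d n i m)"

definition qwOuterTerm :: "complex \<Rightarrow> complex \<Rightarrow> complex \<Rightarrow> complex \<Rightarrow> nat \<Rightarrow> nat \<Rightarrow> complex" where
  "qwOuterTerm a gam om z n i =
     (if n = 0 then pochhammer a i / (pochhammer 1 i * pochhammer gam i) * z ^ i
      else qwF0 a gam om i * qwLev a gam om z (n - 1) n i)"

definition qwCoeff :: "complex \<Rightarrow> complex \<Rightarrow> complex \<Rightarrow> complex \<Rightarrow> nat \<Rightarrow> complex" where
  "qwCoeff a gam om z n = (\<Sum>i. qwOuterTerm a gam om z n i)"

text \<open>QW(omega, gam; et; z) with a = Omega/(2 mu) as extra explicit parameter.\<close>
definition QW :: "complex \<Rightarrow> complex \<Rightarrow> complex \<Rightarrow> complex \<Rightarrow> complex \<Rightarrow> complex" where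
  "QW a om gam et z = Gamma (gam - a) / Gamma gam * (\<Sum>n. qwCoeff a gam om z n * et ^ n)"

definition QW_converges :: "complex \<Rightarrow> complex \<Rightarrow> complex \<Rightarrow> complex \<Rightarrow> complex \<Rightarrow> bool" where
  "QW_converges a om gam et z \<longleftrightarrow>
     (\<forall>n d i. d < n \<longrightarrow> summable (qwLevTerm a gam om z d n i)) \<and>
     (\<forall>n. summable (qwOuterTerm a gam om z n)) \<and>
     summable (\<lambda>n. qwCoeff a gam om z n * et ^ n)"

end

theory Submission
  imports Defs
begin

text \<open>Expanding the nested series, \<open>QW\<close> becomes a double series \<open>\<Sum>n j. c n j * z^j * e^n\<close>
  in \<open>z = -\<mu> x\<^sup>2 / 2\<close> and \<open>e = -\<epsilon> x / 2\<close>, whose coefficients are finite sums of products of the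
  Pochhammer quotients. Peeling off the innermost summation gives
  \<open>c n j = weight * c (n-1) j + ratio * c n (j-1)\<close>, and clearing the denominators of \<open>weight\<close>
  and \<open>ratio\<close> turns this into the three-term recurrence satisfied by the Taylor coefficients in
  \<open>x\<close> of a solution of the GCH equation. Since \<open>\<nu>\<close> stays away from the nonpositive integers,
  \<open>weight\<close> and \<open>ratio\<close> are bounded, so every nested series is dominated by a geometric double
  series; near \<open>x = 0\<close> all of them can therefore be rearranged into one convergent power series
  in \<open>x\<close>, which solves the equation because of the recurrence.\<close>

section \<open>Dominated double series\<close>

lemma summable_on_geometric_product:
  fixes K q :: real
  assumes K: "0 \<le> K" and q: "0 \<le> q" "q < 1"
  shows "(\<lambda>(m,m'). K * q^m * q^m') summable_on UNIV"
proof -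
  have geo: "summable (\<lambda>n. q^n)" using q by (simp add: summable_geometric)
  have "((\<lambda>m'. K * q^m * q^m') has_sum (K * q^m * (\<Sum>n. q^n))) UNIV" for m
    by (rule norm_summable_imp_has_sum)
       (use geo K q in \<open>auto simp: abs_mult intro!: summable_mult sums_mult summable_sums\<close>)
  moreover have "(\<lambda>m. K * q^m * (\<Sum>n. q^n)) summable_on UNIV"
    by (rule norm_summable_imp_summable_on)
       (use geo K q suminf_nonneg[OF geo] in \<open>auto simp: abs_mult intro!: summable_mult2 summable_mult\<close>)
  ultimately have "(\<lambda>(m,m'). K * q^m * q^m') summable_on Sigma UNIV (\<lambda>_. UNIV)"
    by (intro summable_on_SigmaI) (use K q in auto)
  thus ?thesis by simp
qed

lemma double_series_fibers:
  fixes F :: "nat \<Rightarrow> nat \<Rightarrow> complex" and h :: "nat \<times> nat \<Rightarrow> nat"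
  assumes q: "0 \<le> q" "q < 1" and bound: "\<And>m m'. norm (F m m') \<le> K * q^m * q^m'"
    and fin: "\<And>N. finite (h -` {N})"
  shows "summable (\<lambda>m. \<Sum>m'. F m m')"
    and "(\<lambda>N. \<Sum>p\<in>h -` {N}. F (fst p) (snd p)) sums (\<Sum>m. \<Sum>m'. F m m')"
proof -
  define G where "G = (\<lambda>p. F (fst p) (snd p))"
  have K: "K \<ge> 0" using order_trans[OF norm_ge_zero bound[of 0 0]] by simp
  have geo: "summable (\<lambda>n. q^n)" using q by (simp add: summable_geometric)
  have row: "summable (\<lambda>m'. norm (F m m'))" for m
    by (rule summable_comparison_test'[where g="\<lambda>m'. K * q^m * q^m'"])
       (use q K bound geo in \<open>auto intro!: summable_mult\<close>)
  have abs: "Infinite_Sum.abs_summable_on G UNIV"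
    by (rule Infinite_Sum.abs_summable_on_comparison_test'[OF summable_on_geometric_product[OF K q]])
       (use bound in \<open>auto simp: G_def\<close>)
  hence total: "(G has_sum infsum G UNIV) UNIV"
    by (simp add: abs_summable_summable)
  hence sigma: "(G has_sum infsum G UNIV) (Sigma UNIV (\<lambda>_. UNIV))"
    by simp
  have row_sum: "((\<lambda>m'. G (m, m')) has_sum (\<Sum>m'. F m m')) UNIV" for m
    using norm_summable_imp_has_sum[OF row summable_sums[OF summable_norm_cancel[OF row]]]
    by (simp add: G_def)
  have rows: "((\<lambda>m. \<Sum>m'. F m m') has_sum infsum G UNIV) UNIV"
    by (rule has_sum_Sigma'[OF sigma]) (rule row_sum)
  have "bij_betw snd (Sigma UNIV (\<lambda>N. h -` {N})) UNIV"
    by (auto simp: bij_betw_def inj_on_def image_def)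
  hence "((\<lambda>p. G (snd p)) has_sum infsum G UNIV) (Sigma UNIV (\<lambda>N. h -` {N}))"
    using total by (simp add: has_sum_reindex_bij_betw)
  hence fibers: "((\<lambda>N. \<Sum>p\<in>h -` {N}. G p) has_sum infsum G UNIV) UNIV"
    by (rule has_sum_Sigma') (use fin in auto)
  show "summable (\<lambda>m. \<Sum>m'. F m m')"
    using has_sum_imp_sums[OF rows] by (rule sums_summable)
  show "(\<lambda>N. \<Sum>p\<in>h -` {N}. F (fst p) (snd p)) sums (\<Sum>m. \<Sum>m'. F m m')"
    using has_sum_imp_sums[OF fibers] has_sum_imp_sums[OF rows] by (simp add: G_def sums_iff)
qed

lemma double_series_diagonal:
  fixes F :: "nat \<Rightarrow> nat \<Rightarrow> complex"
  assumes "0 \<le> q" "q < 1" and "\<And>m m'. norm (F m m') \<le> K * q^m * q^m'"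
  shows "summable (\<lambda>m. \<Sum>m'. F m m')"
    and "(\<lambda>N. \<Sum>m\<le>N. F m (N - m)) sums (\<Sum>m. \<Sum>m'. F m m')"
proof -
  have fiber: "(\<lambda>(m,m'). m + m') -` {N} = (\<lambda>m. (m, N - m)) ` {..N}" for N :: nat
    by (auto simp: image_def)
  have "(\<Sum>p\<in>(\<lambda>(m,m'). m + m') -` {N}. F (fst p) (snd p)) = (\<Sum>m\<le>N. F m (N - m))" for N
    unfolding fiber by (subst sum.reindex) (auto simp: inj_on_def)
  with double_series_fibers[OF assms, of "\<lambda>(m,m'). m + m'"]
  show "summable (\<lambda>m. \<Sum>m'. F m m')" and "(\<lambda>N. \<Sum>m\<le>N. F m (N - m)) sums (\<Sum>m. \<Sum>m'. F m m')"
    by (simp_all add: fiber)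
qed

lemma double_series_odd_diagonal:
  fixes F :: "nat \<Rightarrow> nat \<Rightarrow> complex"
  assumes "0 \<le> q" "q < 1" and "\<And>m m'. norm (F m m') \<le> K * q^m * q^m'"
  shows "summable (\<lambda>m. \<Sum>m'. F m m')"
    and "(\<lambda>N. \<Sum>j\<le>N. if 2*j \<le> N then F (N - 2*j) j else 0) sums (\<Sum>m. \<Sum>m'. F m m')"
proof -
  have fiber: "(\<lambda>(n,j). n + 2*j) -` {N} = (\<lambda>j. (N - 2*j, j)) ` {j. j \<le> N \<and> 2*j \<le> N}" for N :: nat
    by (auto simp: image_def)
  have "(\<Sum>p\<in>(\<lambda>(n,j). n + 2*j) -` {N}. F (fst p) (snd p)) = (\<Sum>j\<in>{j. j \<le> N \<and> 2*j \<le> N}. F (N - 2*j) j)" for N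
    unfolding fiber by (subst sum.reindex) (auto simp: inj_on_def)
  also have "\<dots> N = (\<Sum>j\<le>N. if 2*j \<le> N then F (N - 2*j) j else 0)" for N
    by (subst sum.inter_filter[symmetric]) (auto intro!: sum.cong)
  finally show "summable (\<lambda>m. \<Sum>m'. F m m')"
    and "(\<lambda>N. \<Sum>j\<le>N. if 2*j \<le> N then F (N - 2*j) j else 0) sums (\<Sum>m. \<Sum>m'. F m m')"
    using double_series_fibers[OF assms, of "\<lambda>(n,j). n + 2*j"] by (simp_all add: fiber)
qed

lemma sum_triangle_swap:
  "(\<Sum>l=i..j. \<Sum>l'=l..j. f l l') = (\<Sum>l'=i..j. \<Sum>l=i..l'. f l (l'::nat))"
proof -
  have "(\<Sum>l=i..j. \<Sum>l'=l..j. f l l') = (\<Sum>l\<in>{i..j}. \<Sum>l'\<in>{l'\<in>{i..j}. l \<le> l'}. f l l')"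
    by (intro sum.cong) auto
  also have "\<dots> = (\<Sum>l'\<in>{i..j}. \<Sum>l\<in>{l\<in>{i..j}. l \<le> l'}. f l l')"
    by (rule sum.swap_restrict) auto
  also have "\<dots> = (\<Sum>l'=i..j. \<Sum>l=i..l'. f l l')"
    by (intro sum.cong) auto
  finally show ?thesis .
qed

lemma sum_power_double_power_le:
  fixes A :: real
  assumes "A \<ge> 0" "i \<le> j"
  shows "(\<Sum>l=i..j. A^(l-i) * (2*A)^(j-l)) \<le> 2 * (2*A)^(j-i)"
proof -
  have summand: "A^(l-i) * (2*A)^(j-l) = (2*A)^(j-i) * (1/2)^(l-i)" if "i \<le> l" "l \<le> j" for l
  proof -
    have "j - i = (l - i) + (j - l)" using that by simp
    hence "(2*A)^(j-i) = (2*A)^(l-i) * (2*A)^(j-l)"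
      by (simp only: power_add)
    thus ?thesis by (simp add: power_mult_distrib field_simps)
  qed
  have geometric: "(\<Sum>k\<le>n. (1/2::real)^k) = 2 - (1/2)^n" for n
    by (induction n) auto
  have "(\<Sum>l=i..j. A^(l-i) * (2*A)^(j-l)) = (2*A)^(j-i) * (\<Sum>l=i..j. (1/2)^(l-i))"
    unfolding sum_distrib_left by (intro sum.cong) (auto simp only: summand atLeastAtMost_iff)
  also have "(\<Sum>l=i..j. (1/2::real)^(l-i)) = (\<Sum>k\<le>j-i. (1/2)^k)"
    using sum.shift_bounds_cl_nat_ivl[of "\<lambda>l. (1/2::real)^(l-i)" 0 i "j-i"] assms(2)
    by (simp add: atLeast0AtMost)
  also have "(2*A)^(j-i) * (\<Sum>k\<le>j-i. (1/2::real)^k) \<le> (2*A)^(j-i) * 2"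
    by (rule mult_left_mono) (simp_all add: geometric assms(1))
  finally show ?thesis by (simp add: mult.commute)
qed

lemma sum_double_power_power_le:
  fixes A :: real
  assumes "A \<ge> 0"
  shows "(\<Sum>l\<le>j. (2*A)^l * A^(j-l)) \<le> 2 * (2*A)^j"
proof -
  have "(\<Sum>l\<le>j. (2*A)^l * A^(j-l)) = (\<Sum>l=0..j. A^(l-0) * (2*A)^(j-l))"
    by (subst sum.atLeastAtMost_rev) (auto simp: atLeast0AtMost mult.commute intro!: sum.cong)
  also have "\<dots> \<le> 2 * (2*A)^j"
    using sum_power_double_power_le[OF assms, of 0 j] by simp
  finally show ?thesis .
qed

lemma summable_geometric_bound:
  fixes f :: "nat \<Rightarrow> complex"
  assumes "0 \<le> q" "q < 1" "\<And>m. norm (f m) \<le> K * q^m"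
  shows "summable f"
  by (rule summable_comparison_test'[where g="\<lambda>m. K * q^m"])
     (use assms in \<open>auto intro!: summable_mult summable_geometric\<close>)

lemma nonpos_Ints_uniformly_avoided:
  fixes \<nu> :: complex
  assumes "\<And>k::nat. \<nu> \<noteq> - of_nat k"
  shows "\<exists>\<delta>>0. \<forall>m::nat. \<delta> \<le> norm (\<nu> + of_nat m)"
proof -
  define M where "M = nat \<lceil>norm \<nu>\<rceil> + 1"
  have far: "1 \<le> norm (\<nu> + of_nat m)" if "m \<ge> M" for m
  proof -
    have "norm \<nu> + 1 \<le> real m"
      using that real_nat_ceiling_ge[of "norm \<nu>"] unfolding M_def by linarith
    moreover have "real m \<le> norm (\<nu> + of_nat m) + norm \<nu>"
      using norm_triangle_ineq4[of "\<nu> + of_nat m" \<nu>] by simp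
    ultimately show ?thesis by linarith
  qed
  have near: "0 < norm (\<nu> + of_nat m)" for m
    using assms[of m] by (auto simp: add_eq_0_iff)
  define \<delta> where "\<delta> = Min (insert 1 ((\<lambda>m. norm (\<nu> + of_nat m)) ` {..<M}))"
  have "\<delta> > 0" unfolding \<delta>_def using near by (subst Min_gr_iff) auto
  moreover have "\<delta> \<le> norm (\<nu> + of_nat m)" for m
  proof (cases "m < M")
    case True thus ?thesis unfolding \<delta>_def by (intro Min_le) auto
  next
    case False
    have "\<delta> \<le> 1" unfolding \<delta>_def by (intro Min_le) auto
    thus ?thesis using far[of m] False by linarith
  qed
  ultimately show ?thesis by blast
qed

lemma norm_shifted_quotient_le:
  fixes w d :: complex and s c \<delta> :: real
  assumes "0 \<le> s" "0 < c" "0 < \<delta>" "\<delta> \<le> norm d"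
  shows "norm ((of_real s + w) / (of_real (s + c) * d)) \<le> (norm w / c + 1) / \<delta>"
proof -
  have "norm (of_real s + w) \<le> s + norm w"
    using norm_triangle_ineq[of "of_real s" w] assms(1) by simp
  also have "\<dots> \<le> (norm w / c + 1) * (s + c)"
    using assms(1,2) by (simp add: field_simps)
  finally have "norm (of_real s + w) / (s + c) \<le> norm w / c + 1"
    using assms by (simp add: pos_divide_le_eq)
  hence "norm (of_real s + w) / (s + c) / norm d \<le> (norm w / c + 1) / \<delta>"
    using assms by (intro frac_le) auto
  moreover have "norm (of_real (s + c) :: complex) = s + c"
    using assms(1,2) by (simp only: norm_of_real)
  ultimately show ?thesis by (simp add: norm_divide norm_mult)
qed

section \<open>Power series solutions of the GCH equation\<close>

lemma power_series_deriv_sums: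
  fixes c :: "nat \<Rightarrow> 'a::{real_normed_field,banach}"
  assumes sums: "\<And>w. norm w < r \<Longrightarrow> (\<lambda>n. c n * w^n) sums f w" and w: "norm w < r"
  shows "(f has_field_derivative (\<Sum>n. diffs c n * w^n)) (at w)"
    and "(\<lambda>n. diffs c n * w^n) sums deriv f w"
proof -
  have "((\<lambda>w. \<Sum>n. c n * w^n) has_field_derivative (\<Sum>n. diffs c n * w^n)) (at w)"
    by (rule termdiffs_strong') (use sums w in \<open>auto dest: sums_summable\<close>)
  then show deriv: "(f has_field_derivative (\<Sum>n. diffs c n * w^n)) (at w)"
    by (rule has_field_derivative_transform_within_open[where S="ball 0 r"])
       (use sums w in \<open>auto simp: sums_iff\<close>)
  show "(\<lambda>n. diffs c n * w^n) sums deriv f w"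
    using termdiffs_sums_strong[OF sums deriv w] DERIV_imp_deriv[OF deriv] by simp
qed

lemma GCH_power_series_identity:
  fixes c :: "nat \<Rightarrow> complex"
  assumes rec: "\<And>N. of_nat (Suc N) * (of_nat N + \<nu>) * c (Suc N) + \<epsilon> * (of_nat N + \<omega>) * c N
        + (if N = 0 then 0 else (\<mu> * (of_nat N - 1) + \<Omega>) * c (N - 1)) = 0"
    and s0: "(\<lambda>n. c n * x^n) sums P0" and s1: "(\<lambda>n. diffs c n * x^n) sums P1"
    and s2: "(\<lambda>n. diffs (diffs c) n * x^n) sums P2"
  shows "x * P2 + (\<mu> * x^2 + \<epsilon> * x + \<nu>) * P1 + (\<Omega> * x + \<epsilon> * \<omega>) * P0 = 0"
proof -
  have shift: "f sums s" if "(\<lambda>n. f (Suc n)) sums s" "f 0 = 0" for f :: "nat \<Rightarrow> complex" and s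
    using that sums_Suc_iff[of f s] by simp
  have xP2: "(\<lambda>N. of_nat N * of_nat (Suc N) * c (Suc N) * x^N) sums (x * P2)"
    by (rule shift) (use sums_mult[OF s2, of x] in \<open>simp_all add: diffs_def mult_ac\<close>)
  have P1: "(\<lambda>N. of_nat (Suc N) * c (Suc N) * x^N) sums P1"
    using s1 by (simp add: diffs_def)
  have xP1: "(\<lambda>N. of_nat N * c N * x^N) sums (x * P1)"
    by (rule shift) (use sums_mult[OF s1, of x] in \<open>simp_all add: diffs_def mult_ac\<close>)
  have xxP1: "(\<lambda>N. (if N = 0 then 0 else of_nat (N - 1) * c (N - 1)) * x^N) sums (x * (x * P1))"
    by (rule shift) (use sums_mult[OF xP1, of x] in \<open>simp_all add: mult_ac\<close>)
  have xP0: "(\<lambda>N. (if N = 0 then 0 else c (N - 1)) * x^N) sums (x * P0)"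
    by (rule shift) (use sums_mult[OF s0, of x] in \<open>simp_all add: mult_ac\<close>)
  have "(\<lambda>N. of_nat N * of_nat (Suc N) * c (Suc N) * x^N + \<nu> * (of_nat (Suc N) * c (Suc N) * x^N)
      + \<epsilon> * (of_nat N * c N * x^N) + (\<epsilon> * \<omega>) * (c N * x^N)
      + \<mu> * ((if N = 0 then 0 else of_nat (N - 1) * c (N - 1)) * x^N)
      + \<Omega> * ((if N = 0 then 0 else c (N - 1)) * x^N))
     sums (x * P2 + \<nu> * P1 + \<epsilon> * (x * P1) + (\<epsilon> * \<omega>) * P0 + \<mu> * (x * (x * P1)) + \<Omega> * (x * P0))"
    by (intro sums_add sums_mult xP2 P1 xP1 xxP1 xP0 s0)
  moreover have "of_nat N * of_nat (Suc N) * c (Suc N) * x^N + \<nu> * (of_nat (Suc N) * c (Suc N) * x^N)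
      + \<epsilon> * (of_nat N * c N * x^N) + (\<epsilon> * \<omega>) * (c N * x^N)
      + \<mu> * ((if N = 0 then 0 else of_nat (N - 1) * c (N - 1)) * x^N)
      + \<Omega> * ((if N = 0 then 0 else c (N - 1)) * x^N) = 0" for N
  proof -
    have "of_nat N * of_nat (Suc N) * c (Suc N) * x^N + \<nu> * (of_nat (Suc N) * c (Suc N) * x^N)
      + \<epsilon> * (of_nat N * c N * x^N) + (\<epsilon> * \<omega>) * (c N * x^N)
      + \<mu> * ((if N = 0 then 0 else of_nat (N - 1) * c (N - 1)) * x^N)
      + \<Omega> * ((if N = 0 then 0 else c (N - 1)) * x^N) =
      x^N * (of_nat (Suc N) * (of_nat N + \<nu>) * c (Suc N) + \<epsilon> * (of_nat N + \<omega>) * c N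
        + (if N = 0 then 0 else (\<mu> * (of_nat N - 1) + \<Omega>) * c (N - 1)))"
      by (cases N) (simp_all add: algebra_simps)
    thus ?thesis by (simp only: rec mult_zero_right)
  qed
  ultimately have "x * P2 + \<nu> * P1 + \<epsilon> * (x * P1) + (\<epsilon> * \<omega>) * P0 + \<mu> * (x * (x * P1)) + \<Omega> * (x * P0) = 0"
    by (simp add: sums_iff)
  thus ?thesis by (simp add: algebra_simps power2_eq_square)
qed

lemma GCH_solution_of_power_series:
  fixes c :: "nat \<Rightarrow> complex" and y :: "complex \<Rightarrow> complex"
  assumes rec: "\<And>N. of_nat (Suc N) * (of_nat N + \<nu>) * c (Suc N) + \<epsilon> * (of_nat N + \<omega>) * c N
        + (if N = 0 then 0 else (\<mu> * (of_nat N - 1) + \<Omega>) * c (N - 1)) = 0"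
    and sums: "\<And>x. norm x < r \<Longrightarrow> (\<lambda>n. c n * x^n) sums y x"
  shows "y holomorphic_on ball 0 r"
    and "x \<in> ball 0 r \<Longrightarrow>
      x * deriv (deriv y) x + (\<mu> * x^2 + \<epsilon> * x + \<nu>) * deriv y x + (\<Omega> * x + \<epsilon> * \<omega>) * y x = 0"
proof -
  note first = power_series_deriv_sums[of r c y, OF sums]
  note second = power_series_deriv_sums[of r "diffs c" "deriv y", OF first(2)]
  show "y holomorphic_on ball 0 r"
    using first(1) by (auto simp: holomorphic_on_open intro!: exI)
  show "x * deriv (deriv y) x + (\<mu> * x^2 + \<epsilon> * x + \<nu>) * deriv y x + (\<Omega> * x + \<epsilon> * \<omega>) * y x = 0"
    if "x \<in> ball 0 r"
    using that by (intro GCH_power_series_identity[OF rec sums first(2) second(2)]) auto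
qed

section \<open>Coefficients of the QW series\<close>

lemma mult_halves_div_halves:
  fixes Z Y W :: "'a::field_char_0"
  assumes "Z \<noteq> 0" "Y \<noteq> 0"
  shows "Z * Y * ((W / 2) / ((Z / 2) * (Y / 2))) = 2 * W"
  using assms by (simp add: field_simps)

locale QW_series =
  fixes a \<gamma> \<omega> :: complex
begin

definition ratio :: "nat \<Rightarrow> nat \<Rightarrow> complex" where
  "ratio k t = (a + of_nat k / 2 + of_nat t) /
     ((1 + of_nat k / 2 + of_nat t) * (of_nat k / 2 + \<gamma> + of_nat t))"

definition weight :: "nat \<Rightarrow> nat \<Rightarrow> complex" where
  "weight k j = (of_nat j + \<omega> / 2 + of_nat k / 2) /
     ((of_nat j + 1/2 + of_nat k / 2) * (of_nat j - 1/2 + \<gamma> + of_nat k / 2))"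

lemma qwR_eq_prod_ratio: "qwR a \<gamma> k i j = (\<Prod>t\<in>{i..<j}. ratio k t)"
  by (simp add: qwR_def ratio_def)

lemma qwR_same [simp]: "qwR a \<gamma> k i i = 1"
  by (simp add: qwR_def)

lemma qwR_Suc: "i \<le> j \<Longrightarrow> qwR a \<gamma> k i (Suc j) = qwR a \<gamma> k i j * ratio k j"
  by (simp add: qwR_eq_prod_ratio prod.atLeastLessThan_Suc)

lemma qwG_eq: "qwG a \<gamma> \<omega> k i j = weight k j * qwR a \<gamma> k i j"
  by (simp add: qwG_def weight_def)

text \<open>\<open>nested d n i j\<close> is the coefficient of \<open>z^j\<close> in \<open>qwLev a \<gamma> \<omega> z d n i\<close>, and \<open>coeff n j\<close>
  the coefficient of \<open>z^j\<close> in \<open>qwCoeff a \<gamma> \<omega> z n\<close>.\<close>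

fun nested :: "nat \<Rightarrow> nat \<Rightarrow> nat \<Rightarrow> nat \<Rightarrow> complex" where
  "nested 0 n i j = qwR a \<gamma> n i j"
| "nested (Suc d) n i j = (\<Sum>l=i..j. qwG a \<gamma> \<omega> (n - Suc d) i l * nested d n l j)"

fun coeff :: "nat \<Rightarrow> nat \<Rightarrow> complex" where
  "coeff 0 j = pochhammer a j / (pochhammer 1 j * pochhammer \<gamma> j)"
| "coeff (Suc n) j = (\<Sum>l\<le>j. coeff n l * weight n l * qwR a \<gamma> (Suc n) l j)"

lemma qwF0_eq: "qwF0 a \<gamma> \<omega> i = weight 0 i * coeff 0 i"
  by (simp add: qwF0_def weight_def)

lemma nested_Suc_Suc:
  "nested (Suc d) (Suc n) i j = (\<Sum>l=i..j. nested d n i l * weight n l * qwR a \<gamma> (Suc n) l j)"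
proof (induction d arbitrary: i j)
  case 0
  then show ?case by (simp add: qwG_eq mult_ac)
next
  case (Suc d)
  have "nested (Suc (Suc d)) (Suc n) i j =
     (\<Sum>l=i..j. qwG a \<gamma> \<omega> (n - Suc d) i l * nested (Suc d) (Suc n) l j)"
    by simp
  also have "\<dots> = (\<Sum>l=i..j. \<Sum>l'=l..j. qwG a \<gamma> \<omega> (n - Suc d) i l *
       (nested d n l l' * weight n l' * qwR a \<gamma> (Suc n) l' j))"
    by (simp only: Suc.IH sum_distrib_left)
  also have "\<dots> = (\<Sum>l'=i..j. \<Sum>l=i..l'. qwG a \<gamma> \<omega> (n - Suc d) i l *
       (nested d n l l' * weight n l' * qwR a \<gamma> (Suc n) l' j))"
    by (rule sum_triangle_swap)
  also have "\<dots> = (\<Sum>l'=i..j. nested (Suc d) n i l' * weight n l' * qwR a \<gamma> (Suc n) l' j)"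
    by (intro sum.cong refl) (simp add: sum_distrib_left sum_distrib_right mult_ac)
  finally show ?case .
qed

lemma coeff_Suc_eq_sum_nested:
  "coeff (Suc n) p = (\<Sum>i\<le>p. qwF0 a \<gamma> \<omega> i * nested n (Suc n) i p)"
proof (induction n arbitrary: p)
  case 0
  then show ?case by (simp add: qwF0_eq mult_ac)
next
  case (Suc n)
  have "(\<Sum>i\<le>p. qwF0 a \<gamma> \<omega> i * nested (Suc n) (Suc (Suc n)) i p) =
     (\<Sum>i\<le>p. \<Sum>l=i..p. qwF0 a \<gamma> \<omega> i *
       (nested n (Suc n) i l * weight (Suc n) l * qwR a \<gamma> (Suc (Suc n)) l p))"
    by (simp only: nested_Suc_Suc sum_distrib_left)
  also have "\<dots> = (\<Sum>l\<le>p. \<Sum>i\<le>l. qwF0 a \<gamma> \<omega> i *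
       (nested n (Suc n) i l * weight (Suc n) l * qwR a \<gamma> (Suc (Suc n)) l p))"
    using sum_triangle_swap[where i=0 and j=p] by (simp only: atLeast0AtMost)
  also have "\<dots> = (\<Sum>l\<le>p. (\<Sum>i\<le>l. qwF0 a \<gamma> \<omega> i * nested n (Suc n) i l) *
       (weight (Suc n) l * qwR a \<gamma> (Suc (Suc n)) l p))"
    by (intro sum.cong refl) (simp add: sum_distrib_left sum_distrib_right mult_ac)
  also have "\<dots> = (\<Sum>l\<le>p. coeff (Suc n) l * weight (Suc n) l * qwR a \<gamma> (Suc (Suc n)) l p)"
    by (simp only: Suc.IH mult.assoc)
  finally show ?case by simp
qed

lemma coeff_step:
  assumes "1 \<le> n + j"
  shows "coeff n j = (if n = 0 then 0 else weight (n - 1) j * coeff (n - 1) j)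
    + (if j = 0 then 0 else ratio n (j - 1) * coeff n (j - 1))"
proof (cases n)
  case 0
  then obtain j' where "j = Suc j'" using assms by (cases j) auto
  then show ?thesis
    using 0 by (simp add: ratio_def pochhammer_Suc times_divide_times_eq mult_ac add_ac)
next
  case (Suc n')
  show ?thesis
  proof (cases j)
    case (Suc j')
    have "(\<Sum>l\<le>j'. coeff n' l * weight n' l * qwR a \<gamma> (Suc n') l (Suc j')) =
        ratio (Suc n') j' * coeff (Suc n') j'"
      by (simp add: sum_distrib_left qwR_Suc mult_ac)
    then show ?thesis using \<open>n = Suc n'\<close> Suc by (simp add: mult_ac)
  qed (use \<open>n = Suc n'\<close> in simp)
qed

lemma weight_clear_denominator:
  assumes "2 * \<gamma> - 1 + of_nat (2 * j + k) \<noteq> 0"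
  shows "(of_nat (2 * j + k) + 1) * (of_nat (2 * j + k) + 2 * \<gamma> - 1) * weight k j
    = 2 * (2 * of_nat j + of_nat k + \<omega>)"
proof -
  have "of_nat j + 1/2 + of_nat k / 2 = (of_nat (2 * j + k) + 1 :: complex) / 2"
    and "of_nat j - 1/2 + \<gamma> + of_nat k / 2 = (of_nat (2 * j + k) + 2 * \<gamma> - 1) / 2"
    and "of_nat j + \<omega> / 2 + of_nat k / 2 = (2 * of_nat j + of_nat k + \<omega>) / 2"
    by (simp_all add: field_simps)
  hence "weight k j = ((2 * of_nat j + of_nat k + \<omega>) / 2) /
      (((of_nat (2 * j + k) + 1) / 2) * ((of_nat (2 * j + k) + 2 * \<gamma> - 1) / 2))"
    by (simp only: weight_def)
  moreover have "(of_nat (2 * j + k) + 1 :: complex) \<noteq> 0"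
    by (metis of_nat_Suc of_nat_eq_0_iff nat.distinct(1) add.commute)
  moreover have "of_nat (2 * j + k) + 2 * \<gamma> - 1 \<noteq> 0"
    using assms by (simp add: algebra_simps)
  ultimately show ?thesis by (simp add: mult_halves_div_halves)
qed

lemma ratio_clear_denominator:
  assumes "2 * \<gamma> - 1 + of_nat (k + 2 * t + 1) \<noteq> 0"
  shows "(of_nat (k + 2 * t) + 2) * (of_nat (k + 2 * t) + 2 * \<gamma>) * ratio k t
    = 2 * (2 * a + of_nat k + 2 * of_nat t)"
proof -
  have "1 + of_nat k / 2 + of_nat t = (of_nat (k + 2 * t) + 2 :: complex) / 2"
    and "of_nat k / 2 + \<gamma> + of_nat t = (of_nat (k + 2 * t) + 2 * \<gamma>) / 2"
    and "a + of_nat k / 2 + of_nat t = (2 * a + of_nat k + 2 * of_nat t) / 2"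
    by (simp_all add: field_simps)
  hence "ratio k t = ((2 * a + of_nat k + 2 * of_nat t) / 2) /
      (((of_nat (k + 2 * t) + 2) / 2) * ((of_nat (k + 2 * t) + 2 * \<gamma>) / 2))"
    by (simp only: ratio_def)
  moreover have "(of_nat (k + 2 * t) + 2 :: complex) \<noteq> 0"
    by (metis of_nat_add of_nat_eq_0_iff add_is_0 zero_neq_numeral of_nat_numeral)
  moreover have "of_nat (k + 2 * t) + 2 * \<gamma> \<noteq> 0"
    using assms by (simp add: algebra_simps)
  ultimately show ?thesis by (simp add: mult_halves_div_halves)
qed

lemma coeff_recurrence:
  assumes nonzero: "\<And>m. 2 * \<gamma> - 1 + of_nat m \<noteq> 0" and "1 \<le> n + 2 * j"
  shows "of_nat (n + 2 * j) * (of_nat (n + 2 * j) + 2 * \<gamma> - 2) * coeff n j =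
      (if n = 0 then 0 else 2 * (2 * of_nat j + of_nat n - 1 + \<omega>) * coeff (n - 1) j)
    + (if j = 0 then 0 else 2 * (2 * a + of_nat n + 2 * of_nat j - 2) * coeff n (j - 1))"
proof -
  define P :: complex where "P = of_nat (n + 2 * j) * (of_nat (n + 2 * j) + 2 * \<gamma> - 2)"
  have weight_part: "P * (if n = 0 then 0 else weight (n - 1) j * coeff (n - 1) j) =
      (if n = 0 then 0 else 2 * (2 * of_nat j + of_nat n - 1 + \<omega>) * coeff (n - 1) j)"
  proof (cases n)
    case (Suc k)
    have "P = (of_nat (2 * j + k) + 1) * (of_nat (2 * j + k) + 2 * \<gamma> - 1)"
      by (simp add: P_def Suc algebra_simps)
    hence "P * weight k j = 2 * (2 * of_nat j + of_nat k + \<omega>)"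
      using weight_clear_denominator[OF nonzero] by simp
    moreover have "2 * of_nat j + of_nat n - 1 + \<omega> = 2 * of_nat j + of_nat k + \<omega>"
      by (simp add: Suc)
    ultimately show ?thesis by (simp add: Suc mult.assoc[symmetric])
  qed simp
  have ratio_part: "P * (if j = 0 then 0 else ratio n (j - 1) * coeff n (j - 1)) =
      (if j = 0 then 0 else 2 * (2 * a + of_nat n + 2 * of_nat j - 2) * coeff n (j - 1))"
  proof (cases j)
    case (Suc t)
    have "P = (of_nat (n + 2 * t) + 2) * (of_nat (n + 2 * t) + 2 * \<gamma>)"
      by (simp add: P_def Suc algebra_simps)
    hence "P * ratio n t = 2 * (2 * a + of_nat n + 2 * of_nat t)"
      using ratio_clear_denominator[OF nonzero] by simp
    moreover have "2 * a + of_nat n + 2 * of_nat j - 2 = 2 * a + of_nat n + 2 * of_nat t"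
      by (simp add: Suc algebra_simps)
    ultimately show ?thesis by (simp add: Suc mult.assoc[symmetric])
  qed simp
  have "P * coeff n j = P * (if n = 0 then 0 else weight (n - 1) j * coeff (n - 1) j)
      + P * (if j = 0 then 0 else ratio n (j - 1) * coeff n (j - 1))"
    using coeff_step[of n j] assms(2) by (simp add: distrib_left)
  thus ?thesis unfolding weight_part ratio_part by (simp only: P_def)
qed

text \<open>The coefficient of \<open>x^N\<close> in \<open>\<Sum>n. qwCoeff a \<gamma> \<omega> (\<alpha> * x\<^sup>2) n * (\<beta> * x)^n\<close>.\<close>

definition taylor_coeff :: "complex \<Rightarrow> complex \<Rightarrow> nat \<Rightarrow> complex" where
  "taylor_coeff \<beta> \<alpha> N =
     (\<Sum>j\<le>N. if 2 * j \<le> N then coeff (N - 2 * j) j * \<beta>^(N - 2 * j) * \<alpha>^j else 0)"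

lemma taylor_coeff_summand_recurrence:
  assumes nonzero: "\<And>m. 2 * \<gamma> - 1 + of_nat m \<noteq> 0" and j: "2 * j \<le> Suc N"
  shows "of_nat (Suc N) * (of_nat N + 2 * \<gamma> - 1) * (coeff (Suc N - 2 * j) j * \<beta>^(Suc N - 2 * j) * \<alpha>^j)
    + (if 2 * j \<le> N then (-2 * \<beta>) * (of_nat N + \<omega>) * (coeff (N - 2 * j) j * \<beta>^(N - 2 * j) * \<alpha>^j) else 0)
    + (if j = 0 then 0 else (-2 * \<alpha>) * (of_nat N - 1 + 2 * a) *
        (coeff (Suc N - 2 * j) (j - 1) * \<beta>^(Suc N - 2 * j) * \<alpha>^(j - 1))) = 0"
proof -
  define n where "n = Suc N - 2 * j"
  have nN: "Suc N = n + 2 * j" using j by (simp add: n_def)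
  have N_eq: "of_nat N = of_nat n + 2 * of_nat j - (1::complex)"
    using arg_cong[OF nN, of "of_nat :: nat \<Rightarrow> complex"] by (simp add: algebra_simps)
  define X Y Z where "X = coeff n j" and "Y = coeff (n - 1) j" and "Z = coeff n (j - 1)"
  have rec: "of_nat (Suc N) * (of_nat N + 2 * \<gamma> - 1) * X =
      (if n = 0 then 0 else 2 * (2 * of_nat j + of_nat n - 1 + \<omega>) * Y)
    + (if j = 0 then 0 else 2 * (2 * a + of_nat n + 2 * of_nat j - 2) * Z)"
    using coeff_recurrence[OF nonzero, of n j] nN
    by (simp add: X_def Y_def Z_def N_eq algebra_simps)
  have first: "of_nat (Suc N) * (of_nat N + 2 * \<gamma> - 1) * (X * \<beta>^n * \<alpha>^j) =
      \<beta>^n * \<alpha>^j * (of_nat (Suc N) * (of_nat N + 2 * \<gamma> - 1) * X)"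
    by (simp add: algebra_simps)
  have second: "(if n \<noteq> 0 then (-2 * \<beta>) * (of_nat N + \<omega>) * (Y * \<beta>^(n - 1) * \<alpha>^j) else 0) =
      - (\<beta>^n * \<alpha>^j * (if n = 0 then 0 else 2 * (2 * of_nat j + of_nat n - 1 + \<omega>) * Y))"
    by (cases n) (simp_all add: N_eq algebra_simps)
  have third: "(if j = 0 then 0 else (-2 * \<alpha>) * (of_nat N - 1 + 2 * a) * (Z * \<beta>^n * \<alpha>^(j - 1))) =
      - (\<beta>^n * \<alpha>^j * (if j = 0 then 0 else 2 * (2 * a + of_nat n + 2 * of_nat j - 2) * Z))"
    by (cases j) (simp_all add: N_eq algebra_simps)
  have cond: "(2 * j \<le> N) = (n \<noteq> 0)" and exp: "N - 2 * j = n - 1"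
    using nN by auto
  show ?thesis
    unfolding n_def[symmetric] cond exp X_def[symmetric] Y_def[symmetric] Z_def[symmetric]
    unfolding first second third rec by (simp add: algebra_simps)
qed

lemma taylor_coeff_recurrence:
  assumes nonzero: "\<And>m. 2 * \<gamma> - 1 + of_nat m \<noteq> 0"
  shows "of_nat (Suc N) * (of_nat N + 2 * \<gamma> - 1) * taylor_coeff \<beta> \<alpha> (Suc N)
    + (-2 * \<beta>) * (of_nat N + \<omega>) * taylor_coeff \<beta> \<alpha> N
    + (if N = 0 then 0 else (-2 * \<alpha>) * (of_nat N - 1 + 2 * a) * taylor_coeff \<beta> \<alpha> (N - 1)) = 0"
proof -
  define f1 where "f1 j = (if 2 * j \<le> Suc N then of_nat (Suc N) * (of_nat N + 2 * \<gamma> - 1) *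
      (coeff (Suc N - 2 * j) j * \<beta>^(Suc N - 2 * j) * \<alpha>^j) else 0)" for j
  define f2 where "f2 j = (if 2 * j \<le> N then (-2 * \<beta>) * (of_nat N + \<omega>) *
      (coeff (N - 2 * j) j * \<beta>^(N - 2 * j) * \<alpha>^j) else 0)" for j
  define f3 where "f3 j = (if 2 * j \<le> Suc N then (if j = 0 then 0 else (-2 * \<alpha>) * (of_nat N - 1 + 2 * a) *
      (coeff (Suc N - 2 * j) (j - 1) * \<beta>^(Suc N - 2 * j) * \<alpha>^(j - 1))) else 0)" for j
  have "f1 j + f2 j + f3 j = 0" for j
    using taylor_coeff_summand_recurrence[OF nonzero, of j N \<beta> \<alpha>]
    by (cases "2 * j \<le> Suc N") (auto simp: f1_def f2_def f3_def)
  hence "(\<Sum>j\<le>Suc N. f1 j) + (\<Sum>j\<le>Suc N. f2 j) + (\<Sum>j\<le>Suc N. f3 j) = 0"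
    by (simp only: sum.distrib[symmetric] sum.neutral_const)
  moreover have "(\<Sum>j\<le>Suc N. f1 j) = of_nat (Suc N) * (of_nat N + 2 * \<gamma> - 1) * taylor_coeff \<beta> \<alpha> (Suc N)"
    unfolding taylor_coeff_def sum_distrib_left by (intro sum.cong refl) (simp add: f1_def)
  moreover have "(\<Sum>j\<le>Suc N. f2 j) = (-2 * \<beta>) * (of_nat N + \<omega>) * taylor_coeff \<beta> \<alpha> N"
    unfolding taylor_coeff_def sum_distrib_left by (simp add: f2_def) (intro sum.cong refl, simp)
  moreover have "(\<Sum>j\<le>Suc N. f3 j) =
      (if N = 0 then 0 else (-2 * \<alpha>) * (of_nat N - 1 + 2 * a) * taylor_coeff \<beta> \<alpha> (N - 1))"
  proof (cases N)
    case (Suc M)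
    have "(\<Sum>j\<le>Suc N. f3 j) = f3 0 + (\<Sum>j\<le>N. f3 (Suc j))"
      by (rule sum.atMost_Suc_shift)
    also have "\<dots> = (\<Sum>j\<le>M. f3 (Suc j))"
      using Suc by (simp add: f3_def)
    also have "\<dots> = (-2 * \<alpha>) * (of_nat N - 1 + 2 * a) * taylor_coeff \<beta> \<alpha> M"
      unfolding taylor_coeff_def sum_distrib_left using Suc
      by (intro sum.cong refl) (auto simp: f3_def)
    finally show ?thesis using Suc by simp
  qed (simp add: f3_def)
  ultimately show ?thesis by simp
qed

lemma norm_ratio_le:
  assumes "0 < \<delta>" and "\<And>m. \<delta> \<le> norm (2 * \<gamma> - 1 + of_nat m)"
  shows "norm (ratio k t) \<le> (norm a + 1) / (\<delta> / 2)"
proof -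
  have "ratio k t = (of_real (real k / 2 + real t) + a) /
      (of_real (real k / 2 + real t + 1) * ((2 * \<gamma> - 1 + of_nat (k + 2 * t + 1)) / 2))"
    by (simp add: ratio_def field_simps)
  also have "norm \<dots> \<le> (norm a / 1 + 1) / (\<delta> / 2)"
    using assms(1) assms(2)[of "k + 2 * t + 1"]
    by (intro norm_shifted_quotient_le) (auto simp: norm_divide)
  finally show ?thesis by simp
qed

lemma norm_weight_le:
  assumes "0 < \<delta>" and "\<And>m. \<delta> \<le> norm (2 * \<gamma> - 1 + of_nat m)"
  shows "norm (weight k j) \<le> (norm \<omega> + 1) / (\<delta> / 2)"
proof -
  have "weight k j = (of_real (real j + real k / 2) + \<omega> / 2) /
      (of_real (real j + real k / 2 + 1 / 2) * ((2 * \<gamma> - 1 + of_nat (2 * j + k)) / 2))"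
    by (simp add: weight_def field_simps)
  also have "norm \<dots> \<le> (norm (\<omega> / 2) / (1 / 2) + 1) / (\<delta> / 2)"
    using assms(1) assms(2)[of "2 * j + k"]
    by (intro norm_shifted_quotient_le) (auto simp: norm_divide)
  finally show ?thesis by (simp add: norm_divide)
qed

lemma taylor_coeff_GCH_recurrence:
  fixes \<mu> \<epsilon> \<nu> \<Omega> :: complex
  assumes "\<mu> \<noteq> 0" and "a = \<Omega> / (2 * \<mu>)" and "\<gamma> = (1 + \<nu>) / 2"
    and \<nu>: "\<And>k::nat. \<nu> \<noteq> - of_nat k"
  defines "c \<equiv> taylor_coeff (- \<epsilon> / 2) (- \<mu> / 2)"
  shows "of_nat (Suc N) * (of_nat N + \<nu>) * c (Suc N) + \<epsilon> * (of_nat N + \<omega>) * c N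
    + (if N = 0 then 0 else (\<mu> * (of_nat N - 1) + \<Omega>) * c (N - 1)) = 0"
proof -
  have nonzero: "2 * \<gamma> - 1 + of_nat m \<noteq> 0" for m
  proof -
    have "2 * \<gamma> - 1 + of_nat m = \<nu> + of_nat m" by (simp add: assms(3) field_simps)
    thus ?thesis using \<nu>[of m] by (simp add: eq_neg_iff_add_eq_0)
  qed
  have coefficients: "of_nat N + 2 * \<gamma> - 1 = of_nat N + \<nu>" "-2 * (- \<epsilon> / 2) = \<epsilon>"
    "(-2 * (- \<mu> / 2)) * (of_nat N - 1 + 2 * a) = \<mu> * (of_nat N - 1) + \<Omega>"
    using assms(1) by (simp_all add: assms(2,3) field_simps)
  show ?thesis
    using taylor_coeff_recurrence[OF nonzero, of N "- \<epsilon> / 2" "- \<mu> / 2"]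
    unfolding c_def coefficients .
qed

end

section \<open>Convergence of the QW series\<close>

locale QW_series_bounded = QW_series +
  fixes A B :: real
  assumes norm_ratio_le_A: "norm (ratio k t) \<le> A"
    and norm_weight_le_B: "norm (weight k j) \<le> B"
begin

lemma A_nonneg: "0 \<le> A"
  using order_trans[OF norm_ge_zero norm_ratio_le_A] .

lemma B_nonneg: "0 \<le> B"
  using order_trans[OF norm_ge_zero norm_weight_le_B] .

lemma norm_qwR_le: "norm (qwR a \<gamma> k i j) \<le> A^(j - i)"
proof -
  have "norm (qwR a \<gamma> k i j) = (\<Prod>t\<in>{i..<j}. norm (ratio k t))"
    by (simp add: qwR_eq_prod_ratio prod_norm)
  also have "\<dots> \<le> (\<Prod>t\<in>{i..<j}. A)"
    by (rule prod_mono) (simp add: norm_ratio_le_A)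
  finally show ?thesis by simp
qed

lemma norm_qwG_le: "norm (qwG a \<gamma> \<omega> k i l) \<le> B * A^(l - i)"
  unfolding qwG_eq norm_mult
  by (rule mult_mono) (simp_all add: norm_weight_le_B norm_qwR_le B_nonneg)

lemma norm_coeff_0_le: "norm (coeff 0 j) \<le> A^j"
proof (induction j)
  case (Suc j)
  have "norm (coeff 0 (Suc j)) = norm (ratio 0 j) * norm (coeff 0 j)"
    using coeff_step[of 0 "Suc j"] by (simp add: norm_mult del: coeff.simps)
  also have "\<dots> \<le> A * A^j"
    by (rule mult_mono) (use Suc A_nonneg norm_ratio_le_A in auto)
  finally show ?case by simp
qed simp

lemma norm_qwF0_le: "norm (qwF0 a \<gamma> \<omega> i) \<le> B * A^i"
  unfolding qwF0_eq norm_mult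
  by (rule mult_mono) (simp_all add: norm_weight_le_B norm_coeff_0_le B_nonneg del: coeff.simps)

lemma norm_nested_le: "i \<le> j \<Longrightarrow> norm (nested d n i j) \<le> (2 * B)^d * (2 * A)^(j - i)"
proof (induction d arbitrary: i)
  case 0
  have "norm (qwR a \<gamma> n i j) \<le> A^(j - i)" by (rule norm_qwR_le)
  also have "\<dots> \<le> (2 * A)^(j - i)" by (rule power_mono) (use A_nonneg in auto)
  finally show ?case by simp
next
  case (Suc d)
  have "norm (nested (Suc d) n i j) \<le> (\<Sum>l=i..j. norm (qwG a \<gamma> \<omega> (n - Suc d) i l * nested d n l j))"
    by (simp only: nested.simps norm_sum)
  also have "\<dots> \<le> (\<Sum>l=i..j. (B * A^(l - i)) * ((2 * B)^d * (2 * A)^(j - l)))"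
    unfolding norm_mult
    by (intro sum_mono mult_mono norm_qwG_le Suc.IH) (use A_nonneg B_nonneg in auto)
  also have "\<dots> = B * (2 * B)^d * (\<Sum>l=i..j. A^(l - i) * (2 * A)^(j - l))"
    by (simp add: sum_distrib_left mult_ac)
  also have "\<dots> \<le> B * (2 * B)^d * (2 * (2 * A)^(j - i))"
    by (rule mult_left_mono[OF sum_power_double_power_le]) (use A_nonneg B_nonneg Suc.prems in auto)
  also have "\<dots> = (2 * B)^(Suc d) * (2 * A)^(j - i)" by (simp add: mult_ac)
  finally show ?case .
qed

lemma norm_coeff_le: "norm (coeff n j) \<le> (2 * B)^n * (2 * A)^j"
proof (induction n arbitrary: j)
  case 0
  have "norm (coeff 0 j) \<le> A^j" by (rule norm_coeff_0_le)
  also have "\<dots> \<le> (2 * A)^j" by (rule power_mono) (use A_nonneg in auto)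
  finally show ?case by simp
next
  case (Suc n)
  have "norm (coeff (Suc n) j) \<le> (\<Sum>l\<le>j. norm (coeff n l * weight n l * qwR a \<gamma> (Suc n) l j))"
    by (simp only: coeff.simps norm_sum)
  also have "\<dots> \<le> (\<Sum>l\<le>j. ((2 * B)^n * (2 * A)^l) * B * A^(j - l))"
    unfolding norm_mult
    by (intro sum_mono mult_mono Suc.IH norm_weight_le_B norm_qwR_le) (use A_nonneg B_nonneg in auto)
  also have "\<dots> = (2 * B)^n * B * (\<Sum>l\<le>j. (2 * A)^l * A^(j - l))"
    by (simp add: sum_distrib_left mult_ac)
  also have "\<dots> \<le> (2 * B)^n * B * (2 * (2 * A)^j)"
    by (rule mult_left_mono[OF sum_double_power_power_le]) (use A_nonneg B_nonneg in auto)
  also have "\<dots> = (2 * B)^(Suc n) * (2 * A)^j" by (simp add: mult_ac)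
  finally show ?case .
qed

lemma norm_nested_term_le:
  "norm (qwG a \<gamma> \<omega> k i (i + m) * (nested d n (i + m) (i + m + m') * z^(i + m + m')))
    \<le> (B * (2 * B)^d * norm z^i) * (2 * A * norm z)^m * (2 * A * norm z)^m'"
proof -
  have "norm (qwG a \<gamma> \<omega> k i (i + m) * (nested d n (i + m) (i + m + m') * z^(i + m + m')))
      \<le> (B * A^m) * ((2 * B)^d * (2 * A)^m' * (norm z^i * norm z^m * norm z^m'))"
    unfolding norm_mult norm_power power_add
    by (intro mult_mono) (use norm_qwG_le[of k i "i + m"]
        norm_nested_le[of "i + m" "i + m + m'" d n] A_nonneg B_nonneg in auto)
  also have "\<dots> \<le> (B * (2 * A)^m) * ((2 * B)^d * (2 * A)^m' * (norm z^i * norm z^m * norm z^m'))"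
    by (intro mult_mono mult_left_mono power_mono) (use A_nonneg B_nonneg in auto)
  finally show ?thesis by (simp add: power_mult_distrib mult_ac)
qed

lemma norm_outer_term_le:
  "norm (qwF0 a \<gamma> \<omega> i * (nested d n i (i + m) * z^(i + m)))
    \<le> (B * (2 * B)^d) * (2 * A * norm z)^i * (2 * A * norm z)^m"
proof -
  have "norm (qwF0 a \<gamma> \<omega> i * (nested d n i (i + m) * z^(i + m)))
      \<le> (B * A^i) * ((2 * B)^d * (2 * A)^m * (norm z^i * norm z^m))"
    unfolding norm_mult norm_power power_add
    by (intro mult_mono) (use norm_qwF0_le[of i] norm_nested_le[of i "i + m" d n]
        A_nonneg B_nonneg in auto)
  also have "\<dots> \<le> (B * (2 * A)^i) * ((2 * B)^d * (2 * A)^m * (norm z^i * norm z^m))"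
    by (intro mult_mono mult_left_mono power_mono) (use A_nonneg B_nonneg in auto)
  finally show ?thesis by (simp add: power_mult_distrib mult_ac)
qed

lemma qwLev_sums:
  assumes z: "2 * A * norm z < 1"
  shows "summable (qwLevTerm a \<gamma> \<omega> z d n i) \<and>
    (\<lambda>m. nested d n i (i + m) * z^(i + m)) sums qwLev a \<gamma> \<omega> z d n i"
proof (induction d arbitrary: i)
  case 0
  have "norm (qwLevTerm a \<gamma> \<omega> z 0 n i m) \<le> norm z^i * (2 * A * norm z)^m" for m
  proof -
    have "norm (qwLevTerm a \<gamma> \<omega> z 0 n i m) \<le> A^m * (norm z^i * norm z^m)"
      unfolding qwLevTerm.simps norm_mult norm_power power_add
      by (rule mult_right_mono) (use norm_qwR_le[of n i "i + m"] in auto)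
    also have "\<dots> \<le> (2 * A)^m * (norm z^i * norm z^m)"
      by (intro mult_right_mono power_mono) (use A_nonneg in auto)
    finally show ?thesis by (simp add: power_mult_distrib mult_ac)
  qed
  hence "summable (qwLevTerm a \<gamma> \<omega> z 0 n i)"
    using A_nonneg z by (intro summable_geometric_bound) auto
  moreover have "qwLevTerm a \<gamma> \<omega> z 0 n i = (\<lambda>m. nested 0 n i (i + m) * z^(i + m))"
    by (rule ext) simp
  ultimately show ?case by (simp add: summable_sums)
next
  case (Suc d)
  define F where "F m m' = qwG a \<gamma> \<omega> (n - Suc d) i (i + m) *
      (nested d n (i + m) (i + m + m') * z^(i + m + m'))" for m m'
  have bound: "norm (F m m') \<le> (B * (2 * B)^d * norm z^i) * (2 * A * norm z)^m * (2 * A * norm z)^m'"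
    for m m'
    unfolding F_def by (rule norm_nested_term_le)
  have "0 \<le> 2 * A * norm z" using A_nonneg by simp
  note diagonal = double_series_diagonal[OF this z bound]
  have rows: "(\<lambda>m. \<Sum>m'. F m m') = qwLevTerm a \<gamma> \<omega> z (Suc d) n i"
  proof
    fix m
    have "(\<lambda>m'. nested d n (i + m) (i + m + m') * z^(i + m + m')) sums qwLev a \<gamma> \<omega> z d n (i + m)"
      using Suc.IH by blast
    hence "F m sums (qwG a \<gamma> \<omega> (n - Suc d) i (i + m) * qwLev a \<gamma> \<omega> z d n (i + m))"
      unfolding F_def by (rule sums_mult)
    thus "(\<Sum>m'. F m m') = qwLevTerm a \<gamma> \<omega> z (Suc d) n i m" by (simp add: sums_iff)
  qed
  have diagonal_eq: "(\<lambda>N. \<Sum>m\<le>N. F m (N - m)) = (\<lambda>N. nested (Suc d) n i (i + N) * z^(i + N))"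
  proof
    fix N
    have expand: "nested (Suc d) n i (i + N) =
        (\<Sum>m=0..N. qwG a \<gamma> \<omega> (n - Suc d) i (m + i) * nested d n (m + i) (i + N))"
      using sum.shift_bounds_cl_nat_ivl[of "\<lambda>l. qwG a \<gamma> \<omega> (n - Suc d) i l * nested d n l (i + N)" 0 i N]
      by (simp add: add.commute)
    show "(\<Sum>m\<le>N. F m (N - m)) = nested (Suc d) n i (i + N) * z^(i + N)"
      unfolding F_def expand sum_distrib_right atLeast0AtMost
      by (intro sum.cong refl) (auto simp: add.commute)
  qed
  show ?case
    using diagonal unfolding rows diagonal_eq qwLev.simps by blast
qed

lemma qwCoeff_sums:
  assumes z: "2 * A * norm z < 1"
  shows "summable (qwOuterTerm a \<gamma> \<omega> z n) \<and> (\<lambda>j. coeff n j * z^j) sums qwCoeff a \<gamma> \<omega> z n"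
proof (cases n)
  case 0
  have "norm (coeff 0 j * z^j) \<le> 1 * (2 * A * norm z)^j" for j
    using mult_right_mono[OF norm_coeff_le[of 0 j], of "norm z^j"]
    by (simp add: norm_mult norm_power power_mult_distrib del: coeff.simps)
  hence "summable (\<lambda>j. coeff 0 j * z^j)"
    using A_nonneg z by (intro summable_geometric_bound[where K=1]) auto
  moreover have "qwOuterTerm a \<gamma> \<omega> z 0 = (\<lambda>j. coeff 0 j * z^j)"
    by (rule ext) (simp add: qwOuterTerm_def)
  ultimately show ?thesis
    using 0 by (simp add: summable_sums qwCoeff_def del: coeff.simps)
next
  case (Suc n')
  define F where "F i m = qwF0 a \<gamma> \<omega> i * (nested n' (Suc n') i (i + m) * z^(i + m))" for i m
  have bound: "norm (F i m) \<le> (B * (2 * B)^n') * (2 * A * norm z)^i * (2 * A * norm z)^m" for i m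
    unfolding F_def by (rule norm_outer_term_le)
  have "0 \<le> 2 * A * norm z" using A_nonneg by simp
  note diagonal = double_series_diagonal[OF this z bound]
  have rows: "(\<lambda>i. \<Sum>m. F i m) = qwOuterTerm a \<gamma> \<omega> z n"
  proof
    fix i
    have "F i sums (qwF0 a \<gamma> \<omega> i * qwLev a \<gamma> \<omega> z n' (Suc n') i)"
      unfolding F_def using qwLev_sums[OF z] by (intro sums_mult) blast
    thus "(\<Sum>m. F i m) = qwOuterTerm a \<gamma> \<omega> z n i"
      using Suc by (simp add: sums_iff qwOuterTerm_def)
  qed
  have diagonal_eq: "(\<lambda>N. \<Sum>i\<le>N. F i (N - i)) = (\<lambda>N. coeff n N * z^N)"
  proof
    fix N
    have "(\<Sum>i\<le>N. F i (N - i)) = (\<Sum>i\<le>N. qwF0 a \<gamma> \<omega> i * nested n' (Suc n') i N) * z^N"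
      unfolding sum_distrib_right F_def by (intro sum.cong refl) (auto simp: mult_ac)
    thus "(\<Sum>i\<le>N. F i (N - i)) = coeff n N * z^N"
      using Suc by (simp only: coeff_Suc_eq_sum_nested)
  qed
  show ?thesis
    using diagonal unfolding rows diagonal_eq qwCoeff_def by blast
qed

lemma QW_sum_taylor_sums:
  assumes z: "2 * A * norm z < 1" and et: "2 * B * norm et < 1"
    and "z = \<alpha> * x^2" and "et = \<beta> * x"
  shows "summable (\<lambda>n. qwCoeff a \<gamma> \<omega> z n * et^n) \<and>
    (\<lambda>N. taylor_coeff \<beta> \<alpha> N * x^N) sums (\<Sum>n. qwCoeff a \<gamma> \<omega> z n * et^n)"
proof -
  define q where "q = max (2 * A * norm z) (2 * B * norm et)"
  have q: "0 \<le> q" "q < 1" using z et A_nonneg by (auto simp: q_def le_max_iff_disj)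
  define F where "F n j = coeff n j * z^j * et^n" for n j
  have bound: "norm (F n j) \<le> 1 * q^n * q^j" for n j
  proof -
    have "norm (F n j) \<le> ((2 * B)^n * (2 * A)^j) * norm z^j * norm et^n"
      unfolding F_def norm_mult norm_power by (intro mult_right_mono norm_coeff_le) auto
    also have "\<dots> = (2 * B * norm et)^n * (2 * A * norm z)^j"
      by (simp add: power_mult_distrib mult_ac)
    also have "\<dots> \<le> q^n * q^j"
      by (intro mult_mono power_mono) (use A_nonneg B_nonneg q in \<open>auto simp: q_def\<close>)
    finally show ?thesis by simp
  qed
  note odd_diagonal = double_series_odd_diagonal[OF q bound]
  have rows: "(\<lambda>n. \<Sum>j. F n j) = (\<lambda>n. qwCoeff a \<gamma> \<omega> z n * et^n)"
  proof
    fix n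
    have "F n sums (qwCoeff a \<gamma> \<omega> z n * et^n)"
      unfolding F_def using qwCoeff_sums[OF z] by (intro sums_mult2) blast
    thus "(\<Sum>j. F n j) = qwCoeff a \<gamma> \<omega> z n * et^n" by (simp add: sums_iff)
  qed
  have diagonal_eq: "(\<lambda>N. \<Sum>j\<le>N. if 2 * j \<le> N then F (N - 2 * j) j else 0) =
      (\<lambda>N. taylor_coeff \<beta> \<alpha> N * x^N)"
  proof
    fix N
    have "(if 2 * j \<le> N then F (N - 2 * j) j else 0) =
        (if 2 * j \<le> N then coeff (N - 2 * j) j * \<beta>^(N - 2 * j) * \<alpha>^j else 0) * x^N" for j
    proof (cases "2 * j \<le> N")
      case True
      hence "x^N = x^(2 * j) * x^(N - 2 * j)" by (simp flip: power_add)
      thus ?thesis using True assms(3,4) by (simp add: F_def power_mult_distrib power_mult[symmetric] mult_ac)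
    qed simp
    thus "(\<Sum>j\<le>N. if 2 * j \<le> N then F (N - 2 * j) j else 0) = taylor_coeff \<beta> \<alpha> N * x^N"
      unfolding taylor_coeff_def sum_distrib_right by simp
  qed
  show ?thesis
    using odd_diagonal unfolding rows diagonal_eq by blast
qed

lemma QW_taylor_expansion:
  obtains r where "0 < r" and "\<And>x. norm x < r \<Longrightarrow> QW_converges a \<omega> \<gamma> (\<beta> * x) (\<alpha> * x^2) \<and>
    (\<lambda>N. taylor_coeff \<beta> \<alpha> N * x^N) sums (\<Sum>n. qwCoeff a \<gamma> \<omega> (\<alpha> * x^2) n * (\<beta> * x)^n)"
proof
  define D where "D = 1 + 2 * A * norm \<alpha> + 2 * B * norm \<beta>"
  have "0 \<le> 2 * A * norm \<alpha>" "0 \<le> 2 * B * norm \<beta>"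
    using A_nonneg B_nonneg by simp_all
  hence D: "1 \<le> D" "2 * A * norm \<alpha> < D" "2 * B * norm \<beta> < D"
    unfolding D_def by linarith+
  show "0 < 1 / D" using D by simp
  fix x :: complex
  assume x: "norm x < 1 / D"
  have "1 / D \<le> 1" using D by simp
  with x have "norm x < 1" by linarith
  have "norm x * D < 1" using x D by (simp add: field_simps)
  hence "norm x ^ 2 \<le> norm x" using \<open>norm x < 1\<close> by (simp add: power2_eq_square mult_left_le)
  have z: "2 * A * norm (\<alpha> * x^2) < 1"
  proof -
    have "2 * A * norm (\<alpha> * x^2) = (2 * A * norm \<alpha>) * norm x ^ 2"
      by (simp add: norm_mult norm_power)
    also have "\<dots> \<le> D * norm x"
      using \<open>norm x ^ 2 \<le> norm x\<close> D A_nonneg by (intro mult_mono) auto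
    finally show ?thesis using \<open>norm x * D < 1\<close> by (simp add: mult.commute)
  qed
  have et: "2 * B * norm (\<beta> * x) < 1"
  proof -
    have "2 * B * norm (\<beta> * x) \<le> D * norm x"
      using D by (simp add: norm_mult mult.assoc[symmetric] mult_right_mono)
    thus ?thesis using \<open>norm x * D < 1\<close> by (simp add: mult.commute)
  qed
  have "QW_converges a \<omega> \<gamma> (\<beta> * x) (\<alpha> * x^2)"
    unfolding QW_converges_def
    using qwLev_sums[OF z] qwCoeff_sums[OF z] QW_sum_taylor_sums[OF z et refl refl] by blast
  then show "QW_converges a \<omega> \<gamma> (\<beta> * x) (\<alpha> * x^2) \<and>
    (\<lambda>N. taylor_coeff \<beta> \<alpha> N * x^N) sums (\<Sum>n. qwCoeff a \<gamma> \<omega> (\<alpha> * x^2) n * (\<beta> * x)^n)"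
    using QW_sum_taylor_sums[OF z et refl refl] by blast
qed

end

theorem mainTheorem1:
  fixes \<mu> \<epsilon> \<nu> \<Omega> \<omega> :: complex
  assumes "\<mu> \<noteq> 0"
    and "\<forall>k::nat. \<nu> \<noteq> - of_nat k"
    and "\<forall>k::nat. (1 + \<nu>) / 2 - \<Omega> / (2 * \<mu>) \<noteq> - of_nat k"
  shows "\<exists>r>0.
    (\<forall>x\<in>ball 0 r. QW_converges (\<Omega> / (2 * \<mu>)) \<omega> ((1 + \<nu>) / 2) (- \<epsilon> * x / 2) (- \<mu> * x\<^sup>2 / 2)) \<and>
    (\<lambda>x. QW (\<Omega> / (2 * \<mu>)) \<omega> ((1 + \<nu>) / 2) (- \<epsilon> * x / 2) (- \<mu> * x\<^sup>2 / 2)) holomorphic_on ball 0 r \<and>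
    (\<forall>x\<in>ball 0 r.
      (let y = (\<lambda>x. QW (\<Omega> / (2 * \<mu>)) \<omega> ((1 + \<nu>) / 2) (- \<epsilon> * x / 2) (- \<mu> * x\<^sup>2 / 2))
       in x * deriv (deriv y) x + (\<mu> * x\<^sup>2 + \<epsilon> * x + \<nu>) * deriv y x + (\<Omega> * x + \<epsilon> * \<omega>) * y x = 0))"
proof -
  define a \<gamma> where "a = \<Omega> / (2 * \<mu>)" and "\<gamma> = (1 + \<nu>) / 2"
  interpret QW_series a \<gamma> \<omega> .
  obtain \<delta> where "0 < \<delta>" and \<delta>: "\<And>m. \<delta> \<le> norm (2 * \<gamma> - 1 + of_nat m)"
    using nonpos_Ints_uniformly_avoided[of \<nu>] assms(2) by (auto simp: \<gamma>_def field_simps)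
  interpret QW_series_bounded a \<gamma> \<omega> "(norm a + 1) / (\<delta> / 2)" "(norm \<omega> + 1) / (\<delta> / 2)"
    using norm_ratio_le[OF \<open>0 < \<delta>\<close> \<delta>] norm_weight_le[OF \<open>0 < \<delta>\<close> \<delta>] by unfold_locales
  obtain r where "0 < r" and expansion: "\<And>x. norm x < r \<Longrightarrow>
      QW_converges a \<omega> \<gamma> (- \<epsilon> / 2 * x) (- \<mu> / 2 * x\<^sup>2) \<and>
      (\<lambda>N. taylor_coeff (- \<epsilon> / 2) (- \<mu> / 2) N * x^N) sums
        (\<Sum>n. qwCoeff a \<gamma> \<omega> (- \<mu> / 2 * x\<^sup>2) n * (- \<epsilon> / 2 * x)^n)"
    using QW_taylor_expansion[where \<beta> = "- \<epsilon> / 2" and \<alpha> = "- \<mu> / 2"] by blast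
  define y where "y x = QW a \<omega> \<gamma> (- \<epsilon> * x / 2) (- \<mu> * x\<^sup>2 / 2)" for x
  define C where "C = Gamma (\<gamma> - a) / Gamma \<gamma>"
  define c where "c N = C * taylor_coeff (- \<epsilon> / 2) (- \<mu> / 2) N" for N
  have rec: "of_nat (Suc N) * (of_nat N + \<nu>) * c (Suc N) + \<epsilon> * (of_nat N + \<omega>) * c N
      + (if N = 0 then 0 else (\<mu> * (of_nat N - 1) + \<Omega>) * c (N - 1)) = 0" for N
  proof -
    note rec = taylor_coeff_GCH_recurrence[OF assms(1) a_def \<gamma>_def assms(2)[rule_format],
        where \<epsilon> = \<epsilon> and N = N]
    have "of_nat (Suc N) * (of_nat N + \<nu>) * c (Suc N) + \<epsilon> * (of_nat N + \<omega>) * c N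
      + (if N = 0 then 0 else (\<mu> * (of_nat N - 1) + \<Omega>) * c (N - 1)) =
      C * (of_nat (Suc N) * (of_nat N + \<nu>) * taylor_coeff (- \<epsilon> / 2) (- \<mu> / 2) (Suc N)
        + \<epsilon> * (of_nat N + \<omega>) * taylor_coeff (- \<epsilon> / 2) (- \<mu> / 2) N
        + (if N = 0 then 0 else (\<mu> * (of_nat N - 1) + \<Omega>) * taylor_coeff (- \<epsilon> / 2) (- \<mu> / 2) (N - 1)))"
      by (cases N) (simp_all add: c_def algebra_simps)
    thus ?thesis by (simp only: rec mult_zero_right)
  qed
  have sums: "(\<lambda>n. c n * x^n) sums y x" if "norm x < r" for x
    using sums_mult[OF conjunct2[OF expansion[OF that]], of C]
    by (simp add: c_def C_def y_def QW_def mult_ac)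
  note solution = GCH_solution_of_power_series[OF rec sums]
  have "QW_converges a \<omega> \<gamma> (- \<epsilon> * x / 2) (- \<mu> * x\<^sup>2 / 2)" if "x \<in> ball 0 r" for x
    using conjunct1[OF expansion[of x]] that by (simp add: mult_ac)
  with solution \<open>0 < r\<close> show ?thesis
    unfolding Let_def y_def a_def \<gamma>_def by blast
qed

end
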